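(* Let $\mathbf c=\{c_n\}_{n=1}^{\infty}$ be a complex sequence with $\lim_{n\to\infty}c_n=0$, and let $\{R(n)\}$ be an $O$-regularly varying sequence such that for some constant $M(\mathbf c)>0$ $$\sum_{n=m}^{\infty}\left|\frac{c_n}{R(n)}-\frac{c_{n+1}}{R(n+1)}\right|\le M(\mathbf c)\frac{|c_m|}{R(m)}\qquad\text{for all } m=1,2,\dots.$$ Then there exist a natural number $N_0$ and a constant $M'>0$ such that $$\sum_{n=m}^{2m}|c_n-c_{n+1}|\le M'\max_{m\le n<m+N_0}|c_n|\qquad\text{for all } m=1,2,\dots.$$
   Context: A sequence $\{R(n)\}_{n=0}^\infty$ is $O$-regularly varying if it is non-decreasing, positive, and $\limsup_{n\to\infty}R(2n)/R(n)<\infty$. *)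

theory Defs
  imports "HOL-Analysis.Analysis"
begin

definition O_regularly_varying :: "(nat \<Rightarrow> real) \<Rightarrow> bool" where
  "O_regularly_varying R \<longleftrightarrow>
     mono R \<and> (\<forall>n. R n > 0) \<and>
     limsup (\<lambda>n. ereal (R (2 * n) / R n)) < \<infinity>"

end

theory Submission
  imports Defs
begin

(* Put a n = c n / R n. As a n tends to 0, the hypothesis bounds both |a k| for every k >= m
   and the variation of a on [m, 2m] by B = M |c m| / R m. Summation by parts,
   c n - c (n+1) = R n (a n - a (n+1)) + (R n - R (n+1)) a (n+1), together with monotonicity
   of R bounds the variation of c on [m, 2m] by 2 R (2m+1) B, and O-regular variation gives
   R (2m+1) <= K R m. Hence N0 = 1 already suffices. *)

lemma O_regularly_varying_double_le:
  assumes "O_regularly_varying R"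
  shows "\<exists>K\<ge>1. \<forall>n. R (2 * n) \<le> K * R n"
proof -
  have pos: "\<And>n. R n > 0" and limsup: "limsup (\<lambda>n. ereal (R (2 * n) / R n)) < \<infinity>"
    using assms unfolding O_regularly_varying_def by auto
  obtain C where C: "\<And>n. R (2 * n) / R n \<le> C"
    using limsup_finite_then_bounded[OF limsup] by blast
  have "R (2 * n) \<le> max C 1 * R n" for n
    using C[of n] pos[of n] by (smt (verit) pos_divide_le_eq mult_right_mono)
  then show ?thesis by (intro exI[of _ "max C 1"]) auto
qed

lemma O_regularly_varying_Suc_double_le:
  assumes "O_regularly_varying R"
  shows "\<exists>K>0. \<forall>m\<ge>1. R (Suc (2 * m)) \<le> K * R m"
proof -
  have mono: "mono R"
    using assms unfolding O_regularly_varying_def by auto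
  obtain K where "K \<ge> 1" and double: "\<And>n. R (2 * n) \<le> K * R n"
    using O_regularly_varying_double_le[OF assms] by blast
  have "R (Suc (2 * m)) \<le> K\<^sup>2 * R m" if "m \<ge> 1" for m
  proof -
    have "R (Suc (2 * m)) \<le> R (2 * Suc m)" by (simp add: monoD[OF mono])
    also have "\<dots> \<le> K * R (Suc m)" by (rule double)
    also have "\<dots> \<le> K * R (2 * m)"
      using that \<open>K \<ge> 1\<close> by (intro mult_left_mono monoD[OF mono]) auto
    also have "\<dots> \<le> K * (K * R m)"
      using \<open>K \<ge> 1\<close> by (intro mult_left_mono double) auto
    finally show ?thesis by (simp add: power2_eq_square)
  qed
  moreover have "K\<^sup>2 > 0" using \<open>K \<ge> 1\<close> by simp
  ultimately show ?thesis by blast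
qed

lemma tendsto_zero_scaleR_inverse_mono:
  fixes c :: "nat \<Rightarrow> 'a::real_normed_vector"
  assumes "c \<longlonglongrightarrow> 0" and "mono R" and "R 0 > 0"
  shows "(\<lambda>n. c n /\<^sub>R R n) \<longlonglongrightarrow> 0"
proof (rule Lim_null_comparison)
  have "norm (c n /\<^sub>R R n) \<le> norm (c n) / R 0" for n
  proof -
    have "R 0 \<le> R n" using assms(2) by (simp add: monoD)
    then have "norm (c n) / R n \<le> norm (c n) / R 0"
      using assms(3) by (intro divide_left_mono) auto
    then show ?thesis
      using \<open>R 0 \<le> R n\<close> assms(3) by (simp add: divide_inverse mult.commute)
  qed
  then show "\<forall>\<^sub>F n in sequentially. norm (c n /\<^sub>R R n) \<le> norm (c n) / R 0"
    by simp
  show "(\<lambda>n. norm (c n) / R 0) \<longlonglongrightarrow> 0"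
    using tendsto_divide_zero[OF tendsto_norm_zero[OF assms(1)]] .
qed

lemma norm_le_suminf_norm_diff:
  fixes a :: "nat \<Rightarrow> 'a::real_normed_vector"
  assumes "a \<longlonglongrightarrow> 0" and "summable (\<lambda>n. norm (a (n + m) - a (n + m + 1)))" and "m \<le> k"
  shows "norm (a k) \<le> (\<Sum>n. norm (a (n + m) - a (n + m + 1)))"
proof -
  define d where "d n = norm (a (n + m) - a (n + m + 1))" for n
  have "summable d"
    using assms(2) unfolding d_def[abs_def] .
  have "(\<lambda>n. a (n + k)) \<longlonglongrightarrow> 0"
    using LIMSEQ_ignore_initial_segment[OF assms(1)] .
  then have "(\<lambda>n. a (n + k) - a (Suc n + k)) sums a k"
    using telescope_sums' by fastforce
  then have "(\<lambda>N. norm (\<Sum>n<N. a (n + k) - a (Suc n + k))) \<longlonglongrightarrow> norm (a k)"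
    unfolding sums_def by (rule tendsto_norm)
  moreover have "(\<lambda>N. \<Sum>n<N. d (n + (k - m))) \<longlonglongrightarrow> (\<Sum>n. d (n + (k - m)))"
    using \<open>summable d\<close> by (intro summable_LIMSEQ summable_ignore_initial_segment)
  moreover have "norm (\<Sum>n<N. a (n + k) - a (Suc n + k)) \<le> (\<Sum>n<N. d (n + (k - m)))" for N
    using norm_sum assms(3) by (simp add: d_def)
  ultimately have "norm (a k) \<le> (\<Sum>n. d (n + (k - m)))"
    by (meson LIMSEQ_le)
  also have "\<dots> \<le> suminf d"
  proof -
    have "0 \<le> sum d {..<k - m}"
      by (intro sum_nonneg) (simp add: d_def)
    then show ?thesis
      using suminf_split_initial_segment[OF \<open>summable d\<close>, of "k - m"] by linarith
  qed
  finally show ?thesis unfolding d_def .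
qed

lemma norm_diff_scaleR_le:
  fixes x y :: "'a::real_normed_vector"
  assumes "0 \<le> r" and "r \<le> s"
  shows "norm (r *\<^sub>R x - s *\<^sub>R y) \<le> r * norm (x - y) + (s - r) * norm y"
proof -
  have "r *\<^sub>R x - s *\<^sub>R y = r *\<^sub>R (x - y) - (s - r) *\<^sub>R y"
    by (simp add: algebra_simps)
  then show ?thesis
    using assms norm_triangle_ineq4[of "r *\<^sub>R (x - y)" "(s - r) *\<^sub>R y"] by simp
qed

lemma sum_norm_diff_le_of_scaled_bounds:
  fixes c :: "nat \<Rightarrow> 'a::real_normed_vector"
  assumes mono: "mono R" and pos: "\<And>n. R n > 0" and "m \<le> p"
    and tail: "\<And>k. m \<le> k \<Longrightarrow> norm (c k /\<^sub>R R k) \<le> B"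
    and var: "(\<Sum>n=m..p. norm (c n /\<^sub>R R n - c (n + 1) /\<^sub>R R (n + 1))) \<le> B"
  shows "(\<Sum>n=m..p. norm (c n - c (n + 1))) \<le> 2 * R (Suc p) * B"
proof -
  define a where "a n = c n /\<^sub>R R n" for n
  have c_eq: "c n = R n *\<^sub>R a n" for n
    using pos[of n] by (simp add: a_def)
  have "B \<ge> 0" using order_trans[OF norm_ge_zero tail[of m]] by simp
  have "norm (c n - c (n + 1)) \<le> R (Suc p) * norm (a n - a (n + 1)) + (R (Suc n) - R n) * B"
    if "n \<in> {m..p}" for n
  proof -
    have "R n \<le> R (Suc n)" "R n \<le> R (Suc p)" using that mono by (auto simp: monoD)
    then have "norm (c n - c (n + 1)) \<le> R n * norm (a n - a (n + 1)) + (R (Suc n) - R n) * norm (a (n + 1))"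
      unfolding c_eq using pos[of n] by (simp add: norm_diff_scaleR_le)
    also have "\<dots> \<le> R (Suc p) * norm (a n - a (n + 1)) + (R (Suc n) - R n) * B"
      using \<open>R n \<le> R (Suc n)\<close> \<open>R n \<le> R (Suc p)\<close> tail[of "n + 1"] that
      by (intro add_mono mult_right_mono mult_left_mono) (simp_all add: a_def)
    finally show ?thesis .
  qed
  then have "(\<Sum>n=m..p. norm (c n - c (n + 1)))
      \<le> R (Suc p) * (\<Sum>n=m..p. norm (a n - a (n + 1))) + (\<Sum>n=m..p. R (Suc n) - R n) * B"
    by (subst sum_distrib_left, subst sum_distrib_right, subst sum.distrib[symmetric]) (rule sum_mono)
  also have "(\<Sum>n=m..p. R (Suc n) - R n) = R (Suc p) - R m"
    using \<open>m \<le> p\<close> by (simp add: sum_Suc_diff)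
  also have "R (Suc p) * (\<Sum>n=m..p. norm (a n - a (n + 1))) + (R (Suc p) - R m) * B \<le> 2 * R (Suc p) * B"
  proof -
    have "R (Suc p) * (\<Sum>n=m..p. norm (a n - a (n + 1))) \<le> R (Suc p) * B"
      using var pos[of "Suc p"] unfolding a_def by (intro mult_left_mono) auto
    moreover have "0 \<le> R m * B"
      using pos[of m] \<open>B \<ge> 0\<close> by simp
    ultimately show ?thesis
      by (simp add: algebra_simps)
  qed
  finally show ?thesis .
qed

lemma sum_norm_diff_le_of_suminf_le:
  fixes c :: "nat \<Rightarrow> 'a::real_normed_vector"
  assumes mono: "mono R" and pos: "\<And>n. R n > 0" and "m \<le> p"
    and lim: "(\<lambda>n. c n /\<^sub>R R n) \<longlonglongrightarrow> 0"
    and summable: "summable (\<lambda>n. norm (c (n + m) /\<^sub>R R (n + m) - c (n + m + 1) /\<^sub>R R (n + m + 1)))"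
    and suminf_le: "(\<Sum>n. norm (c (n + m) /\<^sub>R R (n + m) - c (n + m + 1) /\<^sub>R R (n + m + 1))) \<le> B"
  shows "(\<Sum>n=m..p. norm (c n - c (n + 1))) \<le> 2 * R (Suc p) * B"
proof (rule sum_norm_diff_le_of_scaled_bounds[OF mono pos \<open>m \<le> p\<close>])
  define a where "a n = c n /\<^sub>R R n" for n
  define d where "d n = norm (a (n + m) - a (n + m + 1))" for n
  have "summable d" and "suminf d \<le> B"
    using summable suminf_le unfolding a_def[symmetric] d_def[symmetric] by auto
  show "norm (c k /\<^sub>R R k) \<le> B" if "m \<le> k" for k
    using norm_le_suminf_norm_diff[OF lim summable that] suminf_le by simp
  have "(\<Sum>n=m..p. norm (a n - a (n + 1))) = (\<Sum>n<Suc (p - m). d n)"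
    unfolding d_def using \<open>m \<le> p\<close>
    by (intro sum.reindex_bij_witness[of _ "\<lambda>n. n + m" "\<lambda>n. n - m"]) auto
  also have "\<dots> \<le> suminf d"
    by (rule sum_le_suminf[OF \<open>summable d\<close>]) (simp_all add: d_def)
  finally show "(\<Sum>n=m..p. norm (c n /\<^sub>R R n - c (n + 1) /\<^sub>R R (n + 1))) \<le> B"
    using \<open>suminf d \<le> B\<close> unfolding a_def by simp
qed

theorem theorem3:
  fixes c :: "nat \<Rightarrow> complex" and R :: "nat \<Rightarrow> real" and M :: real
  assumes c_lim: "c \<longlonglongrightarrow> 0"
    and R_orv: "O_regularly_varying R"
    and M_pos: "M > 0"
    and cond: "\<And>m. m \<ge> 1 \<Longrightarrow>
        summable (\<lambda>n. norm (c (n + m) / of_real (R (n + m)) - c (n + m + 1) / of_real (R (n + m + 1))))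
      \<and> (\<Sum>n. norm (c (n + m) / of_real (R (n + m)) - c (n + m + 1) / of_real (R (n + m + 1))))
          \<le> M * norm (c m) / R m"
  shows "\<exists>(N0::nat) M'. N0 \<ge> 1 \<and> M' > 0 \<and>
    (\<forall>m\<ge>1. (\<Sum>n=m..2*m. norm (c n - c (n + 1))) \<le> M' * Max ((\<lambda>n. norm (c n)) ` {m..<m + N0}))"
proof -
  have mono: "mono R" and pos: "\<And>n. R n > 0"
    using R_orv unfolding O_regularly_varying_def by auto
  obtain K where "K > 0" and K: "\<And>m. m \<ge> 1 \<Longrightarrow> R (Suc (2 * m)) \<le> K * R m"
    using O_regularly_varying_Suc_double_le[OF R_orv] by blast
  have div_eq: "z / of_real r = z /\<^sub>R r" for z :: complex and r
    by (simp add: scaleR_conv_of_real divide_inverse mult.commute)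
  have "(\<Sum>n=m..2*m. norm (c n - c (n + 1))) \<le> 2 * K * M * norm (c m)" if "m \<ge> 1" for m
  proof -
    define B where "B = M * norm (c m) / R m"
    have "(\<Sum>n=m..2*m. norm (c n - c (n + 1))) \<le> 2 * R (Suc (2 * m)) * B"
      using cond[OF that] tendsto_zero_scaleR_inverse_mono[OF c_lim mono pos]
      unfolding div_eq B_def[symmetric] by (intro sum_norm_diff_le_of_suminf_le[OF mono pos]) auto
    also have "\<dots> \<le> 2 * (K * R m) * B"
      using K[OF that] M_pos pos[of m] unfolding B_def by (intro mult_right_mono) auto
    finally show ?thesis using pos[of m] by (simp add: B_def)
  qed
  then show ?thesis
    using \<open>K > 0\<close> M_pos by (intro exI[of _ 1] exI[of _ "2 * K * M"]) auto
qed

end
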